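(* There exists a bounded Jordan domain $D\subsetneq\mathbb{R}^2$ which is $\varphi$-uniform for some $\varphi$, such that $\mathbb{R}^2\setminus\overline{D}$ is not $\psi$-uniform for any $\psi$.
   Context: For a domain $G\subsetneq\mathbb{R}^n$ and $x\in G$, $\delta(x)$ denotes the Euclidean distance from $x$ to $\partial G$. The quasihyperbolic metric is $k_G(x,y)=\inf_\gamma\int_\gamma\frac{|dz|}{\delta(z)}$, the infimum over rectifiable paths joining $x,y$ in $G$. Given a strictly increasing homeomorphism $\varphi:[0,\infty)\to[0,\infty)$ with $\varphi(0)=0$, $G$ is $\varphi$-uniform if $k_G(x,y)\le\varphi\big(\frac{|x-y|}{\min\{\delta(x),\delta(y)\}}\big)$ for all $x,y\in G$; "not $\psi$-uniform for any $\psi$" means this fails for every such homeomorphism $\psi$. *)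

theory Defs
  imports "HOL-Analysis.Analysis"
begin

text \<open>The plane R^2 is modelled by the type complex (a 2-dimensional Euclidean space).\<close>

definition is_domain :: "complex set \<Rightarrow> bool" where
  "is_domain G \<longleftrightarrow> open G \<and> connected G \<and> G \<noteq> {}"

definition bdist :: "complex set \<Rightarrow> complex \<Rightarrow> real" where
  "bdist G x = infdist x (frontier G)"

definition jordan_curve :: "(real \<Rightarrow> complex) \<Rightarrow> bool" where
  "jordan_curve c \<longleftrightarrow> simple_path c \<and> pathfinish c = pathstart c"

definition jordan_domain :: "complex set \<Rightarrow> bool" where
  "jordan_domain D \<longleftrightarrow> is_domain D \<and> (\<exists>c. jordan_curve c \<and> frontier D = path_image c)"

definition qh_length :: "complex set \<Rightarrow> (real \<Rightarrow> complex) \<Rightarrow> real" where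
  "qh_length G g = integral {0..1} (\<lambda>t. norm (vector_derivative g (at t)) / bdist G (g t))"

definition qh_dist :: "complex set \<Rightarrow> complex \<Rightarrow> complex \<Rightarrow> real" where
  "qh_dist G x y = Inf {qh_length G g | g. valid_path g \<and> path_image g \<subseteq> G \<and>
      pathstart g = x \<and> pathfinish g = y \<and>
      (\<lambda>t. norm (vector_derivative g (at t)) / bdist G (g t)) integrable_on {0..1}}"

definition control_fun :: "(real \<Rightarrow> real) \<Rightarrow> bool" where
  "control_fun \<phi> \<longleftrightarrow> strict_mono_on {0..} \<phi> \<and> \<phi> 0 = 0 \<and>
      (\<exists>\<psi>. homeomorphism {0..} {0..} \<phi> \<psi>)"

definition phi_uniform :: "(real \<Rightarrow> real) \<Rightarrow> complex set \<Rightarrow> bool" where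
  "phi_uniform \<phi> G \<longleftrightarrow> (\<forall>x\<in>G. \<forall>y\<in>G.
      qh_dist G x y \<le> \<phi> (norm (x - y) / min (bdist G x) (bdist G y)))"

end

theory Submission
  imports Defs
begin

(* The cusp domain D = {0 < x < 1, |y| < w(x)} with w(x) = (x (1 - x))^2 has two outward cusps.
   Writing its points as (a, s w(a)) with 0 < a < 1 and |s| < 1, the boundary distance is
   comparable to w(a) (1 - |s|).  Joining x and y by the straight segment in the coordinates (a, s),
   the speed stays below (3 r + 3 r^2) w(a) (1 - |s|), where r = |x - y| / min (delta x) (delta y),
   so D is phi-uniform with phi r = 6 r + 6 r^2.
   In the complement, the points (t, -2 t^2) and (t, 2 t^2) next to the cusp tip 0 are 4 t^2 apart
   and at distance at least t^2 / 4 from the boundary, yet every path joining them crosses the real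
   axis outside [0, 1] and hence moves a distance t away from its start.  Since the quasihyperbolic
   length of such a path is at least ln (1 + (t / delta)^2) / 3, their quasihyperbolic distance is
   at least ln (1 / t) / 3, which is unbounded as t tends to 0. *)

lemma convex_comb_bounds:
  fixes a c t :: real
  assumes "0 \<le> t" "t \<le> 1"
  shows "min a c \<le> (1 - t) * a + t * c" "(1 - t) * a + t * c \<le> max a c"
proof -
  have "(1 - t) * min a c \<le> (1 - t) * a" "t * min a c \<le> t * c"
    using assms by (auto intro: mult_left_mono)
  then show "min a c \<le> (1 - t) * a + t * c" by (simp add: algebra_simps)
  have "(1 - t) * a \<le> (1 - t) * max a c" "t * c \<le> t * max a c"
    using assms by (auto intro: mult_left_mono)
  then show "(1 - t) * a + t * c \<le> max a c" by (simp add: algebra_simps)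
qed

lemma abs_convex_comb_le:
  fixes a c t :: real
  assumes "0 \<le> t" "t \<le> 1"
  shows "\<bar>(1 - t) * a + t * c\<bar> \<le> max \<bar>a\<bar> \<bar>c\<bar>"
proof -
  have "\<bar>(1 - t) * a + t * c\<bar> \<le> (1 - t) * \<bar>a\<bar> + t * \<bar>c\<bar>"
    using assms abs_triangle_ineq[of "(1 - t) * a" "t * c"] by (simp add: abs_mult)
  then show ?thesis
    using convex_comb_bounds(2)[OF assms, of "\<bar>a\<bar>" "\<bar>c\<bar>"] by linarith
qed

lemma continuous_on_Complex [continuous_intros]:
  assumes "continuous_on S f" "continuous_on S g"
  shows "continuous_on S (\<lambda>t. Complex (f t) (g t))"
proof -
  have "Complex (f t) (g t) = of_real (f t) + \<i> * of_real (g t)" for t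
    by (simp add: complex_eq_iff)
  then show ?thesis
    using assms by (simp only:) (intro continuous_intros)
qed

lemma Complex_has_vector_derivative:
  assumes "(f has_real_derivative f') (at t)" "(g has_real_derivative g') (at t)"
  shows "((\<lambda>t. Complex (f t) (g t)) has_vector_derivative Complex f' g') (at t)"
proof -
  have "Complex a b = of_real a + \<i> * of_real b" for a b
    by (simp add: complex_eq_iff)
  then show ?thesis
    by (simp only:) (intro derivative_intros has_vector_derivative_of_real assms)
qed

section \<open>Boundary distance and quasihyperbolic distance\<close>

lemma bdist_nonneg: "0 \<le> bdist G x"
  by (simp add: bdist_def infdist_nonneg)

lemma bdist_le_dist: "p \<in> frontier G \<Longrightarrow> bdist G x \<le> dist x p"
  by (simp add: bdist_def infdist_le)

lemma bdist_ge:
  "frontier G \<noteq> {} \<Longrightarrow> (\<And>p. p \<in> frontier G \<Longrightarrow> d \<le> dist x p) \<Longrightarrow> d \<le> bdist G x"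
  by (simp add: bdist_def infdist_notempty cINF_greatest)

lemma bdist_pos: "open G \<Longrightarrow> frontier G \<noteq> {} \<Longrightarrow> x \<in> G \<Longrightarrow> 0 < bdist G x"
  unfolding bdist_def
  by (intro infdist_pos_not_in_closed frontier_closed) (auto simp: frontier_def interior_open)

lemma bdist_le_add_dist: "bdist G y \<le> bdist G x + dist y x"
  by (simp add: bdist_def infdist_triangle)

lemma continuous_on_bdist [continuous_intros]:
  "continuous_on S f \<Longrightarrow> continuous_on S (\<lambda>t. bdist G (f t))"
  unfolding bdist_def by (rule continuous_on_infdist)

definition qh_admissible :: "complex set \<Rightarrow> complex \<Rightarrow> complex \<Rightarrow> (real \<Rightarrow> complex) \<Rightarrow> bool" where
  "qh_admissible G x y g \<longleftrightarrow> valid_path g \<and> path_image g \<subseteq> G \<and> pathstart g = x \<and> pathfinish g = y \<and>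
     (\<lambda>t. norm (vector_derivative g (at t)) / bdist G (g t)) integrable_on {0..1}"

lemma qh_dist_eq_Inf: "qh_dist G x y = Inf (qh_length G ` Collect (qh_admissible G x y))"
  unfolding qh_dist_def qh_admissible_def by (simp add: setcompr_eq_image)

lemma qh_length_nonneg: "qh_admissible G x y g \<Longrightarrow> 0 \<le> qh_length G g"
  unfolding qh_admissible_def qh_length_def
  by (auto intro!: integral_nonneg simp: bdist_nonneg)

lemma qh_dist_le_qh_length: "qh_admissible G x y g \<Longrightarrow> qh_dist G x y \<le> qh_length G g"
  unfolding qh_dist_eq_Inf
  by (rule cInf_lower) (auto intro!: bdd_belowI[of _ 0] qh_length_nonneg)

text \<open>An admissible path must exist: otherwise \<^const>\<open>qh_dist\<close> is an infimum of the empty set.\<close>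
lemma le_qh_dist:
  assumes "qh_admissible G x y g" "\<And>g. qh_admissible G x y g \<Longrightarrow> c \<le> qh_length G g"
  shows "c \<le> qh_dist G x y"
  unfolding qh_dist_eq_Inf using assms by (intro cInf_greatest) auto

lemma qh_admissible_smooth_path:
  assumes deriv: "\<And>t. (g has_vector_derivative g' t) (at t)" and "continuous_on {0..1} g'"
    and "g ` {0..1} \<subseteq> G" "open G" "frontier G \<noteq> {}" "g 0 = x" "g 1 = y"
  shows "qh_admissible G x y g"
    and "(\<lambda>t. norm (g' t) / bdist G (g t)) integrable_on {0..1}"
    and "qh_length G g = integral {0..1} (\<lambda>t. norm (g' t) / bdist G (g t))"
proof -
  have vd: "vector_derivative g (at t) = g' t" for t
    using deriv vector_derivative_at by blast
  have "continuous_on {0..1} g"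
    using deriv by (meson continuous_at_imp_continuous_on has_vector_derivative_continuous)
  moreover have "\<forall>t \<in> {0..1}. bdist G (g t) \<noteq> 0"
    using assms bdist_pos by fastforce
  ultimately show integrable: "(\<lambda>t. norm (g' t) / bdist G (g t)) integrable_on {0..1}"
    using assms by (intro integrable_continuous_interval continuous_intros) auto
  moreover have "valid_path g"
    unfolding valid_path_def using assms
    by (intro C1_differentiable_imp_piecewise) (auto simp: C1_differentiable_on_def intro!: exI[of _ g'])
  ultimately show "qh_admissible G x y g"
    using assms integrable by (simp add: qh_admissible_def vd path_image_def pathstart_def pathfinish_def)
  show "qh_length G g = integral {0..1} (\<lambda>t. norm (g' t) / bdist G (g t))"
    by (simp add: qh_length_def vd)
qed

lemma qh_dist_le_by_smooth_path:
  assumes "\<And>t. (g has_vector_derivative g' t) (at t)" "continuous_on {0..1} g'"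
    and "g ` {0..1} \<subseteq> G" "open G" "frontier G \<noteq> {}" "g 0 = x" "g 1 = y"
    and bound: "\<And>t. t \<in> {0..1} \<Longrightarrow> norm (g' t) \<le> c * bdist G (g t)"
  shows "qh_dist G x y \<le> c"
proof -
  note g = qh_admissible_smooth_path[OF assms(1-7)]
  have "qh_length G g \<le> integral {0..1} (\<lambda>_::real. c)"
    unfolding g(3)
  proof (rule integral_le[OF g(2)])
    show "norm (g' t) / bdist G (g t) \<le> c" if "t \<in> {0..1}" for t
    proof -
      have "g t \<in> G"
        using assms(3) that by blast
      then show ?thesis
        using bound[OF that] bdist_pos[of G "g t"] assms(4,5) by (simp add: divide_le_eq)
    qed
  qed (rule integrable_const_ivl)
  then show ?thesis
    using qh_dist_le_qh_length[OF g(1)] by simp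
qed

lemma two_inner_div_le:
  fixes w v :: "'a::real_inner"
  assumes "0 < d" "0 < b" "b \<le> d + norm w"
  shows "2 * (w \<bullet> v) / (d^2 + (norm w)^2) \<le> 3 * norm v / b"
proof -
  define \<rho> where "\<rho> = norm w"
  have pos: "0 < d^2 + \<rho>^2" "0 < d + \<rho>"
    using assms by (auto simp: \<rho>_def add_pos_nonneg)
  have "0 \<le> 2 * d^2 + (d - \<rho>)^2"
    by simp
  then have "2 * \<rho> * (d + \<rho>) \<le> 3 * (d^2 + \<rho>^2)"
    by (simp add: power2_eq_square algebra_simps)
  then have key: "2 * \<rho> * (d + \<rho>) * norm v \<le> 3 * (d^2 + \<rho>^2) * norm v"
    by (rule mult_right_mono) simp
  have "2 * (w \<bullet> v) / (d^2 + \<rho>^2) \<le> 2 * (\<rho> * norm v) / (d^2 + \<rho>^2)"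
    using norm_cauchy_schwarz[of w v] pos by (simp add: \<rho>_def divide_right_mono)
  also have "\<dots> \<le> 3 * norm v / (d + \<rho>)"
    using key pos by (simp add: divide_simps algebra_simps)
  also have "\<dots> \<le> 3 * norm v / b"
    using assms by (intro divide_left_mono) (auto simp: \<rho>_def)
  finally show ?thesis
    by (simp add: \<rho>_def)
qed

lemma ln_dist_sq_has_vector_derivative:
  fixes g :: "real \<Rightarrow> 'a::real_inner"
  assumes "(g has_vector_derivative V) (at u)" "0 < d"
  shows "((\<lambda>u. ln (d^2 + (norm (g u - x))^2)) has_vector_derivative
           2 * ((g u - x) \<bullet> V) / (d^2 + (norm (g u - x))^2)) (at u)"
proof -
  have "((\<lambda>u. (g u - x) \<bullet> (g u - x)) has_real_derivative 2 * ((g u - x) \<bullet> V)) (at u)"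
    using assms(1) unfolding has_field_derivative_def has_vector_derivative_def
    by (auto intro!: derivative_eq_intros simp: inner_commute algebra_simps)
  then show ?thesis
    unfolding power2_norm_eq_inner has_real_derivative_iff_has_vector_derivative[symmetric] using assms(2)
    by (auto intro!: derivative_eq_intros simp: add_pos_nonneg)
qed

text \<open>The derivative of \<open>ln (\<delta>(x)\<^sup>2 + |g - x|\<^sup>2)\<close> along the path is at most three times the
  quasihyperbolic integrand, because \<open>\<delta>(g) \<le> \<delta>(x) + |g - x|\<close>.\<close>
lemma ln_le_qh_length:
  assumes adm: "qh_admissible G x y g" and G: "open G" "frontier G \<noteq> {}"
    and s: "0 \<le> s" "s \<le> 1" and R: "0 \<le> R" "R \<le> dist (g s) x"
  shows "ln (1 + (R / bdist G x)^2) \<le> 3 * qh_length G g"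
proof -
  obtain S where S: "finite S" "g C1_differentiable_on {0..1} - S" and cont_g: "continuous_on {0..1} g"
    using adm unfolding qh_admissible_def valid_path_def piecewise_C1_differentiable_on_def by blast
  have in_G: "g u \<in> G" if "u \<in> {0..1}" for u
    using adm that by (auto simp: qh_admissible_def path_image_def)
  have g0: "g 0 = x"
    using adm by (simp add: qh_admissible_def pathstart_def)
  define d where "d = bdist G x"
  have d: "0 < d"
    using in_G[of 0] bdist_pos[OF G] by (simp add: d_def g0)
  define f where "f t = norm (vector_derivative g (at t)) / bdist G (g t)" for t
  define F where "F u = ln (d^2 + (norm (g u - x))^2)" for u
  define F' where "F' u = 2 * ((g u - x) \<bullet> vector_derivative g (at u)) / (d^2 + (norm (g u - x))^2)" for u
  have F_deriv: "(F has_vector_derivative F' u) (at u)" if u: "u \<in> {0..s} - S" for u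
    unfolding F_def F'_def using S(2) u s d unfolding C1_differentiable_on_eq
    by (intro ln_dist_sq_has_vector_derivative) (auto intro: vector_derivative_works[THEN iffD1])
  have "continuous_on {0..s} F"
    unfolding F_def using d s
    by (intro continuous_intros continuous_on_subset[OF cont_g]) (auto simp: add_pos_nonneg)
  then have F_integral: "(F' has_integral F s - F 0) {0..s}"
    using F_deriv by (intro fundamental_theorem_of_calculus_strong[OF S(1) s(1)]) auto
  have F'_le: "F' u \<le> 3 * f u" if "u \<in> {0..s}" for u
    unfolding F'_def f_def times_divide_eq_right using that s d bdist_pos[OF G in_G] bdist_le_add_dist[of G "g u" x]
    by (intro two_inner_div_le) (auto simp: d_def dist_norm)
  have f_integrable: "f integrable_on {0..1}"
    using adm unfolding qh_admissible_def f_def by blast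
  have "F s - F 0 \<le> integral {0..s} (\<lambda>u. 3 * f u)"
    using F_integral F'_le integrable_on_subinterval[OF f_integrable] s
    by (intro has_integral_le[OF F_integral integrable_integral]) auto
  also have "\<dots> = 3 * integral {0..s} f"
    by simp
  also have "\<dots> \<le> 3 * integral {0..1} f"
    using integrable_on_subinterval[OF f_integrable] f_integrable s
    by (intro mult_left_mono integral_subset_le) (auto simp: f_def bdist_nonneg)
  also have "\<dots> = 3 * qh_length G g"
    unfolding qh_length_def f_def ..
  finally have "F s - F 0 \<le> 3 * qh_length G g" .
  moreover have "ln (1 + (R / d)^2) = ln (d^2 + R^2) - F 0"
  proof -
    have "1 + (R / d)^2 = (d^2 + R^2) / d^2"
      using d by (simp add: field_simps)
    then show ?thesis
      using d by (simp add: F_def g0 ln_div add_pos_nonneg)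
  qed
  moreover have "ln (d^2 + R^2) \<le> F s"
    unfolding F_def using d R
    by (auto simp: dist_norm add_pos_nonneg intro!: power_mono)
  ultimately show ?thesis
    by (simp add: d_def)
qed

section \<open>The cusp domain\<close>

definition cusp_profile :: "real \<Rightarrow> real" where
  "cusp_profile a = (a * (1 - a))^2"

definition cusp_profile_deriv :: "real \<Rightarrow> real" where
  "cusp_profile_deriv a = 2 * (a * (1 - a)) * (1 - 2 * a)"

lemma mult_one_minus_le_quarter: "a * (1 - a) \<le> (1/4 :: real)"
proof -
  have "0 \<le> (a - 1/2)^2" by simp
  then show ?thesis by (simp add: power2_eq_square algebra_simps)
qed

lemma cusp_profile_nonneg: "0 \<le> cusp_profile a"
  by (simp add: cusp_profile_def)

lemma cusp_profile_pos: "0 < a \<Longrightarrow> a < 1 \<Longrightarrow> 0 < cusp_profile a"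
  by (simp add: cusp_profile_def)

lemma cusp_profile_le_square:
  assumes "0 \<le> a" "a \<le> 1"
  shows "cusp_profile a \<le> a^2"
proof -
  have "0 \<le> a * (1 - a)" "a * (1 - a) \<le> a"
    using assms by (auto simp: algebra_simps mult_left_le)
  then show ?thesis
    unfolding cusp_profile_def by (simp add: power_mono)
qed

lemma cusp_profile_lipschitz:
  assumes "0 \<le> a" "a \<le> 1" "0 \<le> c" "c \<le> 1"
  shows "\<bar>cusp_profile a - cusp_profile c\<bar> \<le> \<bar>a - c\<bar> / 2"
proof -
  have "cusp_profile a - cusp_profile c = (a - c) * (1 - a - c) * (a * (1 - a) + c * (1 - c))"
    by (simp add: cusp_profile_def power2_eq_square algebra_simps)
  moreover have "\<bar>1 - a - c\<bar> \<le> 1" "0 \<le> a * (1 - a) + c * (1 - c)" "a * (1 - a) + c * (1 - c) \<le> 1/2"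
    using assms mult_one_minus_le_quarter[of a] mult_one_minus_le_quarter[of c] by auto
  ultimately have "\<bar>cusp_profile a - cusp_profile c\<bar> \<le> \<bar>a - c\<bar> * 1 * (1/2)"
    by (simp only: abs_mult) (intro mult_mono, auto)
  then show ?thesis by simp
qed

lemma cusp_profile_has_derivative [derivative_intros]:
  assumes "(f has_real_derivative f') (at t)"
  shows "((\<lambda>t. cusp_profile (f t)) has_real_derivative cusp_profile_deriv (f t) * f') (at t)"
  unfolding cusp_profile_def cusp_profile_deriv_def
  by (auto intro!: derivative_eq_intros assms simp: algebra_simps power2_eq_square)

lemma abs_cusp_profile_deriv_le:
  assumes "0 \<le> a" "a \<le> 1"
  shows "\<bar>cusp_profile_deriv a\<bar> \<le> 1/2"
proof -
  have "\<bar>cusp_profile_deriv a\<bar> = 2 * (a * (1 - a)) * \<bar>1 - 2 * a\<bar>"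
    using assms by (simp add: cusp_profile_deriv_def abs_mult)
  also have "\<dots> \<le> 2 * (1/4) * 1"
    using assms mult_one_minus_le_quarter[of a] by (intro mult_mono) auto
  finally show ?thesis by simp
qed

lemma min_cusp_profile_le_convex_comb:
  assumes t: "0 \<le> t" "t \<le> 1" and "0 \<le> a" "a \<le> 1" "0 \<le> c" "c \<le> 1"
  shows "min (cusp_profile a) (cusp_profile c) \<le> cusp_profile ((1 - t) * a + t * c)"
proof -
  define v where "v = (1 - t) * a + t * c"
  have "v * (1 - v) = (1 - t) * (a * (1 - a)) + t * (c * (1 - c)) + t * (1 - t) * (a - c)^2"
    unfolding v_def by (simp add: algebra_simps power2_eq_square)
  moreover have "0 \<le> t * (1 - t) * (a - c)^2"
    using t by simp
  moreover have "min (a * (1 - a)) (c * (1 - c)) \<le> (1 - t) * (a * (1 - a)) + t * (c * (1 - c))"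
    using convex_comb_bounds[OF t] by blast
  ultimately have "min (a * (1 - a)) (c * (1 - c)) \<le> v * (1 - v)"
    by linarith
  moreover have "0 \<le> min (a * (1 - a)) (c * (1 - c))"
    using assms by simp
  ultimately have "(min (a * (1 - a)) (c * (1 - c)))^2 \<le> (v * (1 - v))^2"
    by (rule power_mono)
  moreover have "(min (a * (1 - a)) (c * (1 - c)))^2 = min (cusp_profile a) (cusp_profile c)"
    using assms unfolding cusp_profile_def by (simp add: min_def power_mono)
  ultimately show ?thesis
    unfolding cusp_profile_def v_def by simp
qed

lemma continuous_on_cusp_profile [continuous_intros]:
  "continuous_on S f \<Longrightarrow> continuous_on S (\<lambda>x. cusp_profile (f x))"
  unfolding cusp_profile_def by (intro continuous_intros)

lemma continuous_on_cusp_profile_deriv [continuous_intros]: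
  "continuous_on S f \<Longrightarrow> continuous_on S (\<lambda>x. cusp_profile_deriv (f x))"
  unfolding cusp_profile_deriv_def by (intro continuous_intros)

definition cusp_domain :: "complex set" where
  "cusp_domain = {z. 0 < Re z \<and> Re z < 1 \<and> \<bar>Im z\<bar> < cusp_profile (Re z)}"

definition cusp_point :: "real \<Rightarrow> real \<Rightarrow> complex" where
  "cusp_point a s = Complex a (s * cusp_profile a)"

text \<open>At the tips \<open>0\<close> and \<open>1\<close> the profile vanishes and the height is \<open>0\<close> (as \<open>x / 0 = 0\<close>),
  so \<open>cusp_point (Re z) (cusp_height z) = z\<close> holds on the whole closure of the domain.\<close>
definition cusp_height :: "complex \<Rightarrow> real" where
  "cusp_height z = Im z / cusp_profile (Re z)"

lemma continuous_on_cusp_point [continuous_intros]: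
  "continuous_on S f \<Longrightarrow> continuous_on S g \<Longrightarrow> continuous_on S (\<lambda>x. cusp_point (f x) (g x))"
  unfolding cusp_point_def by (intro continuous_intros)

lemma cusp_point_cusp_height:
  assumes "\<bar>Im z\<bar> \<le> cusp_profile (Re z)"
  shows "cusp_point (Re z) (cusp_height z) = z"
  using assms by (auto simp: cusp_point_def cusp_height_def complex_eq_iff)

lemma abs_cusp_height_le: "\<bar>Im z\<bar> \<le> cusp_profile (Re z) \<Longrightarrow> \<bar>cusp_height z\<bar> \<le> 1"
  by (cases "cusp_profile (Re z) = 0") (auto simp: cusp_height_def abs_div cusp_profile_nonneg)

lemma abs_cusp_height_less: "z \<in> cusp_domain \<Longrightarrow> \<bar>cusp_height z\<bar> < 1"
  by (auto simp: cusp_domain_def cusp_height_def abs_div)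

lemma cusp_point_in_cusp_domain:
  assumes "0 < a" "a < 1" "\<bar>s\<bar> < 1"
  shows "cusp_point a s \<in> cusp_domain"
proof -
  have "\<bar>s\<bar> * cusp_profile a < cusp_profile a"
    using assms cusp_profile_pos[of a] by simp
  then show ?thesis
    using assms by (simp add: cusp_domain_def cusp_point_def abs_mult cusp_profile_nonneg)
qed

lemma cusp_domain_eq_image:
  "cusp_domain = (\<lambda>(a, s). cusp_point a s) ` ({0<..<1} \<times> {-1<..<1})"
proof (intro set_eqI iffI)
  fix z assume z: "z \<in> cusp_domain"
  then have "z = cusp_point (Re z) (cusp_height z)"
    by (intro cusp_point_cusp_height[symmetric]) (auto simp: cusp_domain_def)
  moreover have "(Re z, cusp_height z) \<in> {0<..<1} \<times> {-1<..<1}"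
    using z abs_cusp_height_less[OF z] by (auto simp: cusp_domain_def)
  ultimately show "z \<in> (\<lambda>(a, s). cusp_point a s) ` ({0<..<1} \<times> {-1<..<1})"
    by force
next
  fix z assume "z \<in> (\<lambda>(a, s). cusp_point a s) ` ({0<..<1} \<times> {-1<..<1})"
  then show "z \<in> cusp_domain"
    by (auto intro!: cusp_point_in_cusp_domain)
qed

lemma closure_cusp_domain:
  "closure cusp_domain = {z. 0 \<le> Re z \<and> Re z \<le> 1 \<and> \<bar>Im z\<bar> \<le> cusp_profile (Re z)}"
    (is "_ = ?C")
proof
  have "?C = (\<lambda>(a, s). cusp_point a s) ` ({0..1} \<times> {-1..1})"
  proof (intro set_eqI iffI)
    fix z assume z: "z \<in> ?C"
    then have "z = cusp_point (Re z) (cusp_height z)" "(Re z, cusp_height z) \<in> {0..1} \<times> {-1..1}"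
      using cusp_point_cusp_height[of z] abs_cusp_height_le[of z] by auto
    then show "z \<in> (\<lambda>(a, s). cusp_point a s) ` ({0..1} \<times> {-1..1})"
      by force
  next
    fix z assume "z \<in> (\<lambda>(a, s). cusp_point a s) ` ({0..1} \<times> {-1..1})"
    then obtain a s where "z = cusp_point a s" "0 \<le> a" "a \<le> 1" "\<bar>s\<bar> \<le> 1"
      by auto
    moreover have "\<bar>s\<bar> * cusp_profile a \<le> cusp_profile a"
      using calculation cusp_profile_nonneg[of a] by (simp add: mult_left_le_one_le)
    ultimately show "z \<in> ?C"
      by (simp add: cusp_point_def abs_mult cusp_profile_nonneg)
  qed
  also have "\<dots> = (\<lambda>(a, s). cusp_point a s) ` closure ({0<..<1} \<times> {-1<..<1})"
    by (simp add: closure_Times)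
  also have "\<dots> \<subseteq> closure cusp_domain"
    unfolding cusp_domain_eq_image
    by (intro continuous_image_closure_subset[OF _ subset_UNIV])
       (auto intro!: continuous_intros simp: case_prod_unfold)
  finally show "?C \<subseteq> closure cusp_domain" .
  have "compact ?C"
    unfolding \<open>?C = _\<close>
    by (intro compact_continuous_image compact_Times)
       (auto intro!: continuous_intros simp: case_prod_unfold)
  then show "closure cusp_domain \<subseteq> ?C"
    by (intro closure_minimal compact_imp_closed) (auto simp: cusp_domain_def)
qed

lemma open_cusp_domain: "open cusp_domain"
proof -
  have "cusp_domain = {z. 0 < Re z} \<inter> {z. Re z < 1} \<inter> {z. \<bar>Im z\<bar> < cusp_profile (Re z)}"
    unfolding cusp_domain_def by auto
  also have "open \<dots>"
    by (intro open_Int open_Collect_less continuous_intros)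
  finally show ?thesis .
qed

lemma frontier_cusp_domain:
  "frontier cusp_domain = {z. 0 \<le> Re z \<and> Re z \<le> 1 \<and> \<bar>Im z\<bar> = cusp_profile (Re z)}"
proof -
  have "frontier cusp_domain = closure cusp_domain - cusp_domain"
    using open_cusp_domain by (simp add: frontier_def interior_open)
  also have "\<dots> = {z. 0 \<le> Re z \<and> Re z \<le> 1 \<and> \<bar>Im z\<bar> = cusp_profile (Re z)}"
    unfolding closure_cusp_domain unfolding cusp_domain_def by (auto simp: cusp_profile_def less_le)
  finally show ?thesis .
qed

lemma zero_in_frontier_cusp_domain: "0 \<in> frontier cusp_domain"
  by (simp add: frontier_cusp_domain cusp_profile_def)

lemma interior_closure_cusp_domain: "interior (closure cusp_domain) = cusp_domain"
proof
  show "cusp_domain \<subseteq> interior (closure cusp_domain)"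
    by (intro interior_maximal closure_subset open_cusp_domain)
  show "interior (closure cusp_domain) \<subseteq> cusp_domain"
  proof
    fix z assume z: "z \<in> interior (closure cusp_domain)"
    then obtain e where e: "0 < e" "ball z e \<subseteq> closure cusp_domain"
      by (meson mem_interior)
    show "z \<in> cusp_domain"
    proof (rule ccontr)
      assume "z \<notin> cusp_domain"
      then have "z \<in> frontier cusp_domain"
        using z interior_subset open_cusp_domain by (auto simp: frontier_def interior_open)
      then have edge: "\<bar>Im z\<bar> = cusp_profile (Re z)"
        by (simp add: frontier_cusp_domain)
      define z' where "z' = Complex (Re z) (Im z + (if 0 \<le> Im z then e/2 else - e/2))"
      have "dist z z' < e"
        using e by (simp add: z'_def dist_norm cmod_def)
      moreover have "cusp_profile (Re z') < \<bar>Im z'\<bar>"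
        using e edge by (auto simp: z'_def)
      ultimately show False
        using e by (auto simp: closure_cusp_domain)
    qed
  qed
qed

lemma bounded_cusp_domain: "bounded cusp_domain"
proof (rule bounded_subset[OF bounded_cball])
  show "cusp_domain \<subseteq> cball 0 2"
  proof
    fix z assume "z \<in> cusp_domain"
    then have "0 < Re z" "Re z < 1" "\<bar>Im z\<bar> \<le> (Re z)^2"
      using cusp_profile_le_square[of "Re z"] by (auto simp: cusp_domain_def)
    moreover have "(Re z)^2 \<le> 1"
      using calculation by (simp add: power_le_one)
    ultimately show "z \<in> cball 0 2"
      using cmod_le[of z] by simp
  qed
qed

lemma connected_cusp_domain: "connected cusp_domain"
  unfolding cusp_domain_eq_image
  by (intro connected_continuous_image convex_connected convex_Times)
     (auto intro!: continuous_intros simp: case_prod_unfold)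

lemma jordan_domain_cusp_domain: "jordan_domain cusp_domain"
proof -
  define upper where "upper t = cusp_point t 1" for t
  define lower where "lower t = cusp_point (1 - t) (-1)" for t
  have ends: "pathstart upper = 0" "pathfinish upper = 1" "pathstart lower = 1" "pathfinish lower = 0"
    by (auto simp: upper_def lower_def pathstart_def pathfinish_def cusp_point_def
        cusp_profile_def complex_eq_iff)
  have arcs: "arc upper" "arc lower"
    unfolding arc_def path_def upper_def lower_def cusp_point_def
    by (auto intro!: continuous_intros inj_onI simp: complex_eq_iff)
  have upper_image: "path_image upper = {z. 0 \<le> Re z \<and> Re z \<le> 1 \<and> Im z = cusp_profile (Re z)}"
    unfolding path_image_def upper_def cusp_point_def
    by (auto simp: image_iff complex_eq_iff intro!: bexI[where x="Re _"])
  have lower_image: "path_image lower = {z. 0 \<le> Re z \<and> Re z \<le> 1 \<and> Im z = - cusp_profile (Re z)}"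
    unfolding path_image_def lower_def cusp_point_def
    by (auto simp: image_iff complex_eq_iff intro!: bexI[where x="1 - Re _"])
  have "path_image upper \<inter> path_image lower \<subseteq> {pathstart upper, pathstart lower}"
  proof
    fix z assume "z \<in> path_image upper \<inter> path_image lower"
    then have "0 \<le> Re z" "Re z \<le> 1" "Im z = 0" "cusp_profile (Re z) = 0"
      unfolding upper_image lower_image by auto
    then show "z \<in> {pathstart upper, pathstart lower}"
      using cusp_profile_pos[of "Re z"] ends by (force simp: complex_eq_iff)
  qed
  then have "simple_path (upper +++ lower)"
    using ends by (intro simple_path_join_loop[OF arcs]) auto
  then have "jordan_curve (upper +++ lower)"
    unfolding jordan_curve_def using ends by simp
  moreover have "frontier cusp_domain = path_image (upper +++ lower)"
    using ends by (auto simp: path_image_join upper_image lower_image frontier_cusp_domain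
        abs_eq_iff' cusp_profile_nonneg)
  moreover have "cusp_point (1/2) 0 \<in> cusp_domain"
    by (simp add: cusp_domain_def cusp_point_def cusp_profile_def)
  ultimately show ?thesis
    unfolding jordan_domain_def is_domain_def
    using open_cusp_domain connected_cusp_domain by blast
qed

section \<open>Uniformity of the cusp domain\<close>

lemma bdist_cusp_point_ge:
  assumes "0 < a" "a < 1" "\<bar>s\<bar> < 1"
  shows "cusp_profile a * (1 - \<bar>s\<bar>) / 2 \<le> bdist cusp_domain (cusp_point a s)"
proof (rule bdist_ge)
  show "frontier cusp_domain \<noteq> {}"
    using zero_in_frontier_cusp_domain by blast
  define d where "d = cusp_profile a * (1 - \<bar>s\<bar>) / 2"
  have "0 < d"
    using assms cusp_profile_pos by (simp add: d_def)
  fix p assume "p \<in> frontier cusp_domain"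
  then have p: "0 \<le> Re p" "Re p \<le> 1" "\<bar>Im p\<bar> = cusp_profile (Re p)"
    by (auto simp: frontier_cusp_domain)
  show "d \<le> dist (cusp_point a s) p"
  proof (rule ccontr)
    assume "\<not> d \<le> dist (cusp_point a s) p"
    then have close: "\<bar>Re p - a\<bar> < d" "\<bar>Im p - s * cusp_profile a\<bar> < d"
      using abs_Re_le_cmod[of "p - cusp_point a s"] abs_Im_le_cmod[of "p - cusp_point a s"]
      by (auto simp: dist_norm norm_minus_commute cusp_point_def)
    have "\<bar>cusp_profile (Re p) - cusp_profile a\<bar> \<le> \<bar>Re p - a\<bar> / 2"
      using p assms by (intro cusp_profile_lipschitz) auto
    then have "cusp_profile a - d / 2 < cusp_profile (Re p)"
      using close(1) by argo
    moreover have "\<bar>Im p\<bar> < \<bar>s\<bar> * cusp_profile a + d"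
      using close(2) abs_triangle_ineq2[of "Im p" "s * cusp_profile a"]
      by (simp add: abs_mult cusp_profile_nonneg)
    moreover have "\<bar>s\<bar> * cusp_profile a = cusp_profile a - 2 * d"
      unfolding d_def by (simp add: field_simps)
    ultimately show False
      using p(3) \<open>0 < d\<close> by linarith
  qed
qed

lemma bdist_cusp_point_le:
  assumes "0 \<le> a" "a \<le> 1" "\<bar>s\<bar> \<le> 1"
  shows "bdist cusp_domain (cusp_point a s) \<le> cusp_profile a * (1 - \<bar>s\<bar>)"
proof -
  define \<sigma> :: real where "\<sigma> = (if 0 \<le> s then 1 else -1)"
  have edge: "cusp_point a \<sigma> \<in> frontier cusp_domain"
    using assms by (simp add: \<sigma>_def frontier_cusp_domain cusp_point_def cusp_profile_nonneg)
  have "cusp_point a s - cusp_point a \<sigma> = Complex 0 ((s - \<sigma>) * cusp_profile a)"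
    by (simp add: cusp_point_def complex_eq_iff algebra_simps)
  moreover have "\<bar>s - \<sigma>\<bar> = 1 - \<bar>s\<bar>"
    using assms by (simp add: \<sigma>_def)
  ultimately have "dist (cusp_point a s) (cusp_point a \<sigma>) = cusp_profile a * (1 - \<bar>s\<bar>)"
    by (simp add: dist_norm cmod_def abs_mult cusp_profile_nonneg)
  then show ?thesis
    using bdist_le_dist[OF edge, of "cusp_point a s"] by simp
qed

lemma cusp_point_has_vector_derivative:
  assumes "(a has_real_derivative a') (at t)" "(s has_real_derivative s') (at t)"
  shows "((\<lambda>t. cusp_point (a t) (s t)) has_vector_derivative
           Complex a' (s' * cusp_profile (a t) + s t * (cusp_profile_deriv (a t) * a'))) (at t)"
  unfolding cusp_point_def
  by (rule Complex_has_vector_derivative[OF assms(1)]) (auto intro!: derivative_eq_intros assms)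

lemma norm_cusp_velocity_le:
  assumes "0 \<le> a" "a \<le> 1" "\<bar>s\<bar> \<le> 1"
  shows "norm (Complex a' (s' * cusp_profile a + s * (cusp_profile_deriv a * a')))
           \<le> 3/2 * \<bar>a'\<bar> + \<bar>s'\<bar> * cusp_profile a"
proof -
  have "\<bar>s * (cusp_profile_deriv a * a')\<bar> \<le> 1 * (1/2 * \<bar>a'\<bar>)"
    unfolding abs_mult[of s] abs_mult[of _ a'] using assms abs_cusp_profile_deriv_le[OF assms(1,2)]
    by (intro mult_mono) auto
  then have "\<bar>s' * cusp_profile a + s * (cusp_profile_deriv a * a')\<bar> \<le> \<bar>s'\<bar> * cusp_profile a + 1/2 * \<bar>a'\<bar>"
    using abs_triangle_ineq[of "s' * cusp_profile a" "s * (cusp_profile_deriv a * a')"]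
    by (simp add: abs_mult[of s'] cusp_profile_nonneg)
  then show ?thesis
    using cmod_le[of "Complex a' (s' * cusp_profile a + s * (cusp_profile_deriv a * a'))"]
    by simp
qed

lemma abs_height_diff_le:
  fixes wx wy sx sy \<delta> :: real
  assumes "0 \<le> wx" "\<bar>sy\<bar> \<le> 1" "\<bar>wx - wy\<bar> \<le> \<delta> / 2" "\<bar>sy * wy - sx * wx\<bar> \<le> \<delta>"
  shows "wx * \<bar>sy - sx\<bar> \<le> 3/2 * \<delta>"
proof -
  have "wx * \<bar>sy - sx\<bar> = \<bar>wx * (sy - sx)\<bar>"
    using assms(1) by (simp add: abs_mult)
  also have "\<dots> = \<bar>sy * (wx - wy) + (sy * wy - sx * wx)\<bar>"
    by (simp add: algebra_simps)
  also have "\<dots> \<le> \<bar>sy\<bar> * \<bar>wx - wy\<bar> + \<bar>sy * wy - sx * wx\<bar>"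
    using abs_triangle_ineq by (metis abs_mult)
  also have "\<dots> \<le> 1 * (\<delta> / 2) + \<delta>"
    using assms by (intro add_mono mult_mono) auto
  finally show ?thesis
    by simp
qed

lemma cusp_coordinates_estimate:
  fixes ax ay sx sy r :: real
  defines "P \<equiv> min (cusp_profile ax * (1 - \<bar>sx\<bar>)) (cusp_profile ay * (1 - \<bar>sy\<bar>))"
    and "\<mu> \<equiv> min (1 - \<bar>sx\<bar>) (1 - \<bar>sy\<bar>)"
  assumes a: "0 < ax" "ax < 1" "0 < ay" "ay < 1" and s: "\<bar>sx\<bar> < 1" "\<bar>sy\<bar> < 1" and r: "0 \<le> r"
    and close: "cmod (cusp_point ay sy - cusp_point ax sx) \<le> r * P"
  shows "\<bar>ay - ax\<bar> \<le> r * P" "\<bar>sy - sx\<bar> \<le> 3/2 * r * \<mu>"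
    and "P \<le> (1 + 2 * r) * (min (cusp_profile ax) (cusp_profile ay) * \<mu>)"
proof -
  define wx wy where "wx = cusp_profile ax" and "wy = cusp_profile ay"
  have w: "0 < wx" "0 < wy"
    using a cusp_profile_pos by (auto simp: wx_def wy_def)
  show da: "\<bar>ay - ax\<bar> \<le> r * P"
    using close abs_Re_le_cmod[of "cusp_point ay sy - cusp_point ax sx"] by (simp add: cusp_point_def)
  have dIm: "\<bar>sy * wy - sx * wx\<bar> \<le> r * P"
    using close abs_Im_le_cmod[of "cusp_point ay sy - cusp_point ax sx"]
    by (simp add: cusp_point_def wx_def wy_def)
  have dw: "\<bar>wx - wy\<bar> \<le> r * P / 2"
    using cusp_profile_lipschitz[of ax ay] a da by (simp add: wx_def wy_def)
  have "wx * \<bar>sy - sx\<bar> \<le> 3/2 * (r * P)"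
    using w s dw dIm by (intro abs_height_diff_le) auto
  also have "\<dots> \<le> 3/2 * (r * (wx * (1 - \<bar>sx\<bar>)))"
    using r by (intro mult_left_mono) (auto simp: P_def wx_def)
  also have "\<dots> = wx * (3/2 * r * (1 - \<bar>sx\<bar>))"
    by (simp add: algebra_simps)
  finally have dsx: "\<bar>sy - sx\<bar> \<le> 3/2 * r * (1 - \<bar>sx\<bar>)"
    using w by (simp add: mult_le_cancel_left_pos)
  have "wy * \<bar>sx - sy\<bar> \<le> 3/2 * (r * P)"
    using w s dw dIm by (intro abs_height_diff_le) (auto simp: abs_minus_commute)
  also have "\<dots> \<le> 3/2 * (r * (wy * (1 - \<bar>sy\<bar>)))"
    using r by (intro mult_left_mono) (auto simp: P_def wy_def)
  also have "\<dots> = wy * (3/2 * r * (1 - \<bar>sy\<bar>))"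
    by (simp add: algebra_simps)
  finally have dsy: "\<bar>sy - sx\<bar> \<le> 3/2 * r * (1 - \<bar>sy\<bar>)"
    using w by (simp add: mult_le_cancel_left_pos abs_minus_commute)
  show ds: "\<bar>sy - sx\<bar> \<le> 3/2 * r * \<mu>"
    using dsx dsy by (simp add: \<mu>_def min_def)
  have "0 \<le> r * \<mu>"
    using r s by (simp add: \<mu>_def)
  then have "1 - \<bar>sx\<bar> \<le> (1 + 2 * r) * \<mu>" "1 - \<bar>sy\<bar> \<le> (1 + 2 * r) * \<mu>"
    using ds abs_triangle_ineq3[of sy sx] by (auto simp: \<mu>_def min_def algebra_simps)
  then have "wx * (1 - \<bar>sx\<bar>) \<le> wx * ((1 + 2 * r) * \<mu>)" "wy * (1 - \<bar>sy\<bar>) \<le> wy * ((1 + 2 * r) * \<mu>)"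
    using w by simp_all
  then show "P \<le> (1 + 2 * r) * (min (cusp_profile ax) (cusp_profile ay) * \<mu>)"
    by (auto simp: P_def wx_def wy_def min_def algebra_simps)
qed

lemma cusp_segment_speed_le:
  fixes ax ay sx sy r P t :: real
  defines "A \<equiv> (1 - t) * ax + t * ay" and "S \<equiv> (1 - t) * sx + t * sy"
    and "\<mu> \<equiv> min (1 - \<bar>sx\<bar>) (1 - \<bar>sy\<bar>)"
  assumes a: "0 \<le> ax" "ax \<le> 1" "0 \<le> ay" "ay \<le> 1" and s: "\<bar>sx\<bar> \<le> 1" "\<bar>sy\<bar> \<le> 1"
    and t: "0 \<le> t" "t \<le> 1" and r: "0 \<le> r"
    and da: "\<bar>ay - ax\<bar> \<le> r * P" and ds: "\<bar>sy - sx\<bar> \<le> 3/2 * r * \<mu>"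
    and P: "P \<le> (1 + 2 * r) * (min (cusp_profile ax) (cusp_profile ay) * \<mu>)"
  shows "3/2 * \<bar>ay - ax\<bar> + \<bar>sy - sx\<bar> * cusp_profile A
           \<le> (3 * r + 3 * r^2) * (cusp_profile A * (1 - \<bar>S\<bar>))"
proof -
  define W where "W = cusp_profile A"
  define \<nu> where "\<nu> = 1 - \<bar>S\<bar>"
  have W: "min (cusp_profile ax) (cusp_profile ay) \<le> W"
    unfolding W_def A_def using a t by (intro min_cusp_profile_le_convex_comb)
  have \<nu>: "\<mu> \<le> \<nu>"
    unfolding \<mu>_def \<nu>_def S_def using abs_convex_comb_le[OF t, of sx sy] by linarith
  have "0 \<le> \<mu>"
    using s by (simp add: \<mu>_def)
  have "3/2 * \<bar>ay - ax\<bar> \<le> 3/2 * r * ((1 + 2 * r) * (W * \<nu>))"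
  proof -
    have "min (cusp_profile ax) (cusp_profile ay) * \<mu> \<le> W * \<nu>"
      using W \<nu> \<open>0 \<le> \<mu>\<close> by (intro mult_mono) (auto simp: W_def cusp_profile_nonneg)
    then have "(1 + 2 * r) * (min (cusp_profile ax) (cusp_profile ay) * \<mu>) \<le> (1 + 2 * r) * (W * \<nu>)"
      using r by (intro mult_left_mono) auto
    then have "P \<le> (1 + 2 * r) * (W * \<nu>)"
      using P by linarith
    then have "r * P \<le> r * ((1 + 2 * r) * (W * \<nu>))"
      using r by (rule mult_left_mono)
    then show ?thesis
      using da by simp
  qed
  moreover have "\<bar>sy - sx\<bar> \<le> 3/2 * r * \<nu>"
    using ds mult_left_mono[OF \<nu>, of "3/2 * r"] r by linarith
  then have "\<bar>sy - sx\<bar> * W \<le> 3/2 * r * \<nu> * W"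
    by (rule mult_right_mono) (simp add: W_def cusp_profile_nonneg)
  moreover have "3/2 * r * ((1 + 2 * r) * (W * \<nu>)) + 3/2 * r * \<nu> * W = (3 * r + 3 * r^2) * (W * \<nu>)"
    by (simp add: algebra_simps power2_eq_square)
  ultimately have "3/2 * \<bar>ay - ax\<bar> + \<bar>sy - sx\<bar> * W \<le> (3 * r + 3 * r^2) * (W * \<nu>)"
    by linarith
  then show ?thesis
    by (simp add: W_def \<nu>_def)
qed

definition cusp_gauge :: "real \<Rightarrow> real" where
  "cusp_gauge r = 6 * r + 6 * r^2"

lemma qh_dist_cusp_domain_le:
  assumes x: "x \<in> cusp_domain" and y: "y \<in> cusp_domain"
  shows "qh_dist cusp_domain x y
           \<le> cusp_gauge (cmod (x - y) / min (bdist cusp_domain x) (bdist cusp_domain y))"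
proof -
  define ax ay sx sy where "ax = Re x" and "ay = Re y" and "sx = cusp_height x" and "sy = cusp_height y"
  have a: "0 < ax" "ax < 1" "0 < ay" "ay < 1"
    using x y by (auto simp: ax_def ay_def cusp_domain_def)
  have s: "\<bar>sx\<bar> < 1" "\<bar>sy\<bar> < 1"
    using x y abs_cusp_height_less by (auto simp: sx_def sy_def)
  have xy: "x = cusp_point ax sx" "y = cusp_point ay sy"
    using x y cusp_point_cusp_height by (auto simp: ax_def ay_def sx_def sy_def cusp_domain_def)
  define M where "M = min (bdist cusp_domain x) (bdist cusp_domain y)"
  define r where "r = cmod (x - y) / M"
  define P where "P = min (cusp_profile ax * (1 - \<bar>sx\<bar>)) (cusp_profile ay * (1 - \<bar>sy\<bar>))"
  have "0 < M"
    using x y bdist_pos[OF open_cusp_domain] zero_in_frontier_cusp_domain by (auto simp: M_def)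
  then have r: "0 \<le> r" and "cmod (y - x) = r * M"
    by (simp_all add: r_def norm_minus_commute)
  moreover have "M \<le> P"
    unfolding M_def P_def xy using a s by (intro min.mono bdist_cusp_point_le) auto
  ultimately have "cmod (cusp_point ay sy - cusp_point ax sx) \<le> r * P"
    by (simp add: xy mult_left_mono)
  note estimate = cusp_coordinates_estimate[OF a s r this[unfolded P_def]]
  define A S where "A t = (1 - t) * ax + t * ay" and "S t = (1 - t) * sx + t * sy" for t
  define v where "v t = Complex (ay - ax) ((sy - sx) * cusp_profile (A t) + S t * (cusp_profile_deriv (A t) * (ay - ax)))" for t
  have A: "0 < A t" "A t < 1" and S: "\<bar>S t\<bar> < 1" if "t \<in> {0..1}" for t
    using convex_comb_bounds[of t ax ay] abs_convex_comb_le[of t sx sy] a s that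
    by (auto simp: A_def S_def)
  have "norm (v t) \<le> cusp_gauge r * bdist cusp_domain (cusp_point (A t) (S t))" if t: "t \<in> {0..1}" for t
  proof -
    have "norm (v t) \<le> 3/2 * \<bar>ay - ax\<bar> + \<bar>sy - sx\<bar> * cusp_profile (A t)"
      unfolding v_def using A[OF t] S[OF t] by (intro norm_cusp_velocity_le) auto
    also have "\<dots> \<le> (3 * r + 3 * r^2) * (cusp_profile (A t) * (1 - \<bar>S t\<bar>))"
      unfolding A_def S_def
      by (rule cusp_segment_speed_le[OF _ _ _ _ _ _ _ _ r estimate]) (use a s t in auto)
    also have "\<dots> \<le> (3 * r + 3 * r^2) * (2 * bdist cusp_domain (cusp_point (A t) (S t)))"
      using bdist_cusp_point_ge[OF A[OF t] S[OF t]] r by (intro mult_left_mono) auto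
    finally show ?thesis
      by (simp add: cusp_gauge_def algebra_simps)
  qed
  moreover have "((\<lambda>t. cusp_point (A t) (S t)) has_vector_derivative v t) (at t)" for t
    unfolding A_def S_def v_def by (intro cusp_point_has_vector_derivative) (auto intro!: derivative_eq_intros)
  moreover have "continuous_on {0..1} v"
    unfolding v_def A_def S_def by (intro continuous_intros)
  moreover have "(\<lambda>t. cusp_point (A t) (S t)) ` {0..1} \<subseteq> cusp_domain"
    using A S by (auto intro: cusp_point_in_cusp_domain)
  moreover have "cusp_point (A 0) (S 0) = x" "cusp_point (A 1) (S 1) = y"
    by (simp_all add: A_def S_def xy)
  ultimately show ?thesis
    unfolding M_def[symmetric] r_def[symmetric] using open_cusp_domain zero_in_frontier_cusp_domain
    by (intro qh_dist_le_by_smooth_path[where g = "\<lambda>t. cusp_point (A t) (S t)" and g' = v]) auto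
qed

lemma control_fun_cusp_gauge: "control_fun cusp_gauge"
  unfolding control_fun_def
proof (intro conjI exI)
  show "strict_mono_on {0..} cusp_gauge"
    by (rule strict_mono_onI) (auto simp: cusp_gauge_def intro!: add_strict_mono power_strict_mono)
  show "cusp_gauge 0 = 0"
    by (simp add: cusp_gauge_def)
  define inv where "inv y = (sqrt (1 + 2 * y / 3) - 1) / 2" for y :: real
  show "homeomorphism {0..} {0..} cusp_gauge inv"
  proof (rule homeomorphismI)
    show "continuous_on {0..} cusp_gauge" "continuous_on {0..} inv"
      unfolding cusp_gauge_def inv_def by (intro continuous_intros; simp)+
    show "cusp_gauge ` {0..} \<subseteq> {0..}" "inv ` {0..} \<subseteq> {0..}"
      by (auto simp: cusp_gauge_def inv_def)
    show "inv (cusp_gauge r) = r" if "r \<in> {0..}" for r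
    proof -
      have "1 + 2 * cusp_gauge r / 3 = (1 + 2 * r)^2"
        by (simp add: cusp_gauge_def power2_eq_square algebra_simps)
      then show ?thesis
        using that by (simp add: inv_def)
    qed
    show "cusp_gauge (inv y) = y" if "y \<in> {0..}" for y
    proof -
      have "(sqrt (1 + 2 * y / 3))^2 = 1 + 2 * y / 3"
        using that by simp
      then show ?thesis
        by (simp add: cusp_gauge_def inv_def power2_eq_square field_simps)
    qed
  qed
qed

lemma phi_uniform_cusp_domain: "phi_uniform cusp_gauge cusp_domain"
  unfolding phi_uniform_def using qh_dist_cusp_domain_le by blast

section \<open>The complement of its closure is not uniform\<close>

lemma frontier_complement_closure_cusp_domain:
  "frontier (- closure cusp_domain) = frontier cusp_domain"
proof -
  have "frontier (- closure cusp_domain) = closure cusp_domain - interior (closure cusp_domain)"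
    by (metis frontier_complement frontier_def closure_closure)
  also have "\<dots> = frontier cusp_domain"
    using open_cusp_domain by (simp add: interior_closure_cusp_domain frontier_def interior_open)
  finally show ?thesis .
qed

lemma frontier_complement_closure_cusp_domain_nonempty: "frontier (- closure cusp_domain) \<noteq> {}"
  using frontier_complement_closure_cusp_domain zero_in_frontier_cusp_domain by blast

lemma open_complement_closure_cusp_domain: "open (- closure cusp_domain)"
  by (simp add: open_Compl)

lemma bdist_complement_closure_cusp_domain: "bdist (- closure cusp_domain) = bdist cusp_domain"
  unfolding bdist_def frontier_complement_closure_cusp_domain ..

lemma cusp_complement_test_point_notin:
  assumes "0 < t" "t \<le> 1" "\<bar>Im z\<bar> = 2 * t^2" "Re z = t"
  shows "z \<notin> closure cusp_domain"
proof -
  have "cusp_profile t < 2 * t^2"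
    using assms cusp_profile_le_square[of t] zero_less_power[of t 2] by linarith
  then show ?thesis
    using assms by (simp add: closure_cusp_domain)
qed

lemma bdist_cusp_domain_test_point_ge:
  assumes t: "0 < t" "t \<le> 1/4" and z: "Re z = t" "\<bar>Im z\<bar> = 2 * t^2"
  shows "t^2 / 4 \<le> bdist cusp_domain z"
proof (rule bdist_ge)
  show "frontier cusp_domain \<noteq> {}"
    using zero_in_frontier_cusp_domain by blast
  fix p assume "p \<in> frontier cusp_domain"
  then have p: "0 \<le> Re p" "Re p \<le> 1" "\<bar>Im p\<bar> = cusp_profile (Re p)"
    by (auto simp: frontier_cusp_domain)
  show "t^2 / 4 \<le> dist z p"
  proof (rule ccontr)
    assume "\<not> t^2 / 4 \<le> dist z p"
    then have close: "\<bar>Re p - t\<bar> < t^2 / 4" "\<bar>Im p - Im z\<bar> < t^2 / 4"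
      using abs_Re_le_cmod[of "p - z"] abs_Im_le_cmod[of "p - z"] z
      by (auto simp: dist_norm norm_minus_commute)
    have "t^2 / 4 \<le> t / 16"
      using t by (simp add: power2_eq_square)
    then have "Re p \<le> 17/16 * t"
      using close(1) by linarith
    then have "(Re p)^2 \<le> (17/16 * t)^2"
      using p(1) by (rule power_mono)
    then have "(Re p)^2 \<le> 289/256 * t^2"
      by (simp add: power2_eq_square)
    then have "\<bar>Im p\<bar> \<le> 289/256 * t^2"
      using p cusp_profile_le_square[of "Re p"] by linarith
    moreover have "7/4 * t^2 < \<bar>Im p\<bar>"
      using close(2) z(2) by linarith
    ultimately show False
      using t by simp
  qed
qed

lemma cusp_complement_path_crosses_axis_outside:
  assumes "path g" "path_image g \<subseteq> - closure cusp_domain" "Im (g 0) \<le> 0" "0 \<le> Im (g 1)"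
  obtains s where "s \<in> {0..1}" "Re (g s) < 0 \<or> 1 < Re (g s)"
proof -
  have "continuous_on {0..1} (\<lambda>s. Im (g s))"
    using assms(1) by (intro continuous_intros) (simp add: path_def)
  then obtain s where s: "s \<in> {0..1}" "Im (g s) = 0"
    using IVT'[of "\<lambda>s. Im (g s)" 0 0 1] assms(3,4) by auto
  moreover have "g s \<notin> closure cusp_domain"
    using assms(2) s unfolding path_image_def by blast
  ultimately show ?thesis
    using that by (force simp: closure_cusp_domain cusp_profile_nonneg)
qed

definition cusp_detour :: "real \<Rightarrow> real \<Rightarrow> complex" where
  "cusp_detour t s = Complex (t - 6 * t * s * (1 - s)) (- 2 * t^2 + 4 * t^2 * s)"

lemma cusp_detour_outside:
  assumes t: "0 < t" "t \<le> 1/4" and s: "0 \<le> s" "s \<le> 1"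
  shows "cusp_detour t s \<notin> closure cusp_domain"
proof
  assume "cusp_detour t s \<in> closure cusp_domain"
  then have a: "0 \<le> t - 6 * t * s * (1 - s)" "t - 6 * t * s * (1 - s) \<le> 1"
    and height: "\<bar>- 2 * t^2 + 4 * t^2 * s\<bar> \<le> cusp_profile (t - 6 * t * s * (1 - s))"
    by (auto simp: cusp_detour_def closure_cusp_domain)
  have "t - 6 * t * s * (1 - s) \<le> t"
    using t s by simp
  then have "cusp_profile (t - 6 * t * s * (1 - s)) \<le> t^2"
    using a cusp_profile_le_square[OF a] by (meson order_trans power_mono)
  moreover have "- 2 * t^2 + 4 * t^2 * s = t^2 * (4 * s - 2)"
    by (simp add: algebra_simps)
  then have "\<bar>- 2 * t^2 + 4 * t^2 * s\<bar> = t^2 * \<bar>4 * s - 2\<bar>"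
    by (simp add: abs_mult)
  ultimately have "t^2 * \<bar>4 * s - 2\<bar> \<le> t^2 * 1"
    using height by simp
  then have "1/4 \<le> s" "s \<le> 3/4"
    using t by (auto simp: mult_le_cancel_left_pos abs_le_iff)
  moreover have "(s - 1/4) * (3/4 - s) = s * (1 - s) - 3/16"
    by (simp add: field_simps)
  ultimately have "3/16 \<le> s * (1 - s)"
    using mult_nonneg_nonneg[of "s - 1/4" "3/4 - s"] by linarith
  then have "t * (6 * (3/16)) \<le> t * (6 * (s * (1 - s)))"
    using t by (intro mult_left_mono) auto
  then show False
    using a(1) t by (simp add: algebra_simps)
qed

lemma qh_admissible_cusp_detour:
  assumes "0 < t" "t \<le> 1/4"
  shows "qh_admissible (- closure cusp_domain) (Complex t (- 2 * t^2)) (Complex t (2 * t^2)) (cusp_detour t)"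
proof (rule qh_admissible_smooth_path)
  show "(cusp_detour t has_vector_derivative Complex (- 6 * t * (1 - 2 * s)) (4 * t^2)) (at s)" for s
    unfolding cusp_detour_def
    by (rule Complex_has_vector_derivative) (auto intro!: derivative_eq_intros simp: algebra_simps)
  show "cusp_detour t ` {0..1} \<subseteq> - closure cusp_domain"
    using cusp_detour_outside[OF assms] by auto
  show "frontier (- closure cusp_domain) \<noteq> {}"
    by (rule frontier_complement_closure_cusp_domain_nonempty)
qed (auto simp: cusp_detour_def intro!: continuous_intros)

lemma bdist_cusp_domain_test_point_le:
  assumes "0 \<le> t" "t \<le> 1"
  shows "bdist cusp_domain (Complex t (- 2 * t^2)) \<le> 2 * t^2"
proof -
  have "bdist cusp_domain (Complex t (- 2 * t^2)) \<le> dist (Complex t (- 2 * t^2)) (cusp_point t (-1))"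
    using assms by (intro bdist_le_dist) (simp add: frontier_cusp_domain cusp_point_def cusp_profile_nonneg)
  also have "\<dots> \<le> 2 * t^2"
    using assms cusp_profile_le_square[of t] cusp_profile_nonneg[of t]
    by (simp add: cusp_point_def dist_norm cmod_def)
  finally show ?thesis .
qed

lemma ln_inverse_le_ln_one_plus_square:
  fixes t b :: real
  assumes t: "0 < t" "t \<le> 1/4" and b: "0 < b" "b \<le> 2 * t^2"
  shows "ln (1 / t) \<le> ln (1 + (t / b)^2)"
proof -
  have "1 / t \<le> 1 / (4 * t^2)"
    using t by (simp add: divide_simps power2_eq_square)
  also have "\<dots> = t^2 / (2 * t^2)^2"
    using t by (simp add: power2_eq_square)
  also have "\<dots> \<le> t^2 / b^2"
    using t b by (intro divide_left_mono power_mono) auto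
  also have "\<dots> = (t / b)^2"
    by (simp add: power_divide)
  finally have "1 / t \<le> 1 + (t / b)^2"
    by linarith
  then show ?thesis
    using t by (intro ln_mono) auto
qed

lemma ln_le_qh_dist_cusp_complement:
  assumes t: "0 < t" "t \<le> 1/4"
  shows "ln (1 / t) \<le> 3 * qh_dist (- closure cusp_domain) (Complex t (- 2 * t^2)) (Complex t (2 * t^2))"
proof -
  let ?E = "- closure cusp_domain" and ?x = "Complex t (- 2 * t^2)" and ?y = "Complex t (2 * t^2)"
  have "0 < t^2 / 4" "t^2 / 4 \<le> bdist ?E ?x" "bdist ?E ?x \<le> 2 * t^2"
    using t bdist_cusp_domain_test_point_ge[OF t, of ?x] bdist_cusp_domain_test_point_le[of t]
    by (simp_all add: bdist_complement_closure_cusp_domain)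
  then have "0 < bdist ?E ?x" "bdist ?E ?x \<le> 2 * t^2"
    by linarith+
  then have "ln (1 / t) \<le> ln (1 + (t / bdist ?E ?x)^2)"
    by (rule ln_inverse_le_ln_one_plus_square[OF t])
  also have "\<dots> \<le> 3 * qh_dist ?E ?x ?y"
  proof -
    have "ln (1 + (t / bdist ?E ?x)^2) / 3 \<le> qh_dist ?E ?x ?y"
    proof (rule le_qh_dist[OF qh_admissible_cusp_detour[OF t]])
      fix g assume g: "qh_admissible ?E ?x ?y g"
      then have "path g" "path_image g \<subseteq> ?E" "g 0 = ?x" "g 1 = ?y"
        by (auto simp: qh_admissible_def valid_path_imp_path pathstart_def pathfinish_def)
      then obtain s where s: "s \<in> {0..1}" "Re (g s) < 0 \<or> 1 < Re (g s)"
        using t by (elim cusp_complement_path_crosses_axis_outside) auto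
      have "t \<le> dist (g s) ?x"
        using s t abs_Re_le_cmod[of "g s - ?x"] by (auto simp: dist_norm)
      then have "ln (1 + (t / bdist ?E ?x)^2) \<le> 3 * qh_length ?E g"
        using s t by (intro ln_le_qh_length[OF g open_complement_closure_cusp_domain
            frontier_complement_closure_cusp_domain_nonempty]) auto
      then show "ln (1 + (t / bdist ?E ?x)^2) / 3 \<le> qh_length ?E g"
        by simp
    qed
    then show ?thesis
      by simp
  qed
  finally show ?thesis .
qed

lemma cusp_complement_test_points_ratio_le:
  assumes t: "0 < t" "t \<le> 1/4"
  shows "cmod (Complex t (- 2 * t^2) - Complex t (2 * t^2))
           / min (bdist (- closure cusp_domain) (Complex t (- 2 * t^2)))
                 (bdist (- closure cusp_domain) (Complex t (2 * t^2))) \<le> 16"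
proof -
  let ?E = "- closure cusp_domain" and ?x = "Complex t (- 2 * t^2)" and ?y = "Complex t (2 * t^2)"
  have "t^2 / 4 \<le> bdist ?E ?x" "t^2 / 4 \<le> bdist ?E ?y"
    unfolding bdist_complement_closure_cusp_domain
    by (rule bdist_cusp_domain_test_point_ge[OF t]; simp)+
  then have m: "t^2 / 4 \<le> min (bdist ?E ?x) (bdist ?E ?y)"
    by simp
  moreover have "0 < t^2 / 4"
    using t by simp
  ultimately have "0 < min (bdist ?E ?x) (bdist ?E ?y)"
    by linarith
  moreover have "cmod (?x - ?y) = 4 * t^2"
    using cmod_eq_Im[of "?x - ?y"] by simp
  ultimately show ?thesis
    using m by (simp add: pos_divide_le_eq min_def)
qed

lemma not_phi_uniform_complement_closure_cusp_domain:
  "\<not> (\<exists>\<psi>. control_fun \<psi> \<and> phi_uniform \<psi> (- closure cusp_domain))"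
proof
  assume "\<exists>\<psi>. control_fun \<psi> \<and> phi_uniform \<psi> (- closure cusp_domain)"
  then obtain \<psi> where mono: "strict_mono_on {0..} \<psi>" and unif: "phi_uniform \<psi> (- closure cusp_domain)"
    by (auto simp: control_fun_def)
  define t where "t = min (1/4) (exp (- 3 * \<psi> 16 - 1))"
  have t: "0 < t" "t \<le> 1/4"
    by (auto simp: t_def)
  let ?x = "Complex t (- 2 * t^2)" and ?y = "Complex t (2 * t^2)"
  have "ln t \<le> ln (exp (- 3 * \<psi> 16 - 1))"
    using t by (intro ln_mono) (auto simp: t_def)
  then have "3 * \<psi> 16 + 1 \<le> ln (1 / t)"
    using t by (simp add: ln_div)
  also have "\<dots> \<le> 3 * qh_dist (- closure cusp_domain) ?x ?y"
    by (rule ln_le_qh_dist_cusp_complement[OF t])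
  also have "\<dots> \<le> 3 * \<psi> (cmod (?x - ?y) / min (bdist (- closure cusp_domain) ?x) (bdist (- closure cusp_domain) ?y))"
    using unif t cusp_complement_test_point_notin[of t] by (simp add: phi_uniform_def)
  also have "\<dots> \<le> 3 * \<psi> 16"
    using cusp_complement_test_points_ratio_le[OF t]
    by (simp add: strict_mono_on_leD[OF mono] bdist_nonneg)
  finally show False
    by simp
qed

theorem proposition4p1:
  shows "\<exists>D :: complex set. bounded D \<and> jordan_domain D \<and>
     (\<exists>\<phi>. control_fun \<phi> \<and> phi_uniform \<phi> D) \<and>
     \<not> (\<exists>\<psi>. control_fun \<psi> \<and> phi_uniform \<psi> (- closure D))"
  using bounded_cusp_domain jordan_domain_cusp_domain control_fun_cusp_gauge phi_uniform_cusp_domain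
    not_phi_uniform_complement_closure_cusp_domain by blast

end
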